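(* Let $1 \le a \le b$ be integers and let $G$ be a graph. If $G$ has an $[a,b]$-labelling, then $G$ has an $[a,b]$-labelling in which every edge label is at most $2a$.
   Context: For a graph $G$ and integers $1 \le a \le b$, an $[a,b]$-labelling of $G$ is an assignment of a nonnegative integer label to each edge of $G$ such that (i) for every vertex $v$, the sum of the labels of the edges incident to $v$ is even and lies in $[2a,2b]$, and (ii) the subgraph consisting of all vertices of $G$ and the edges with nonzero label is connected. (A graph has an $[a,b]$-labelling iff it has a closed walk visiting every vertex at least $a$ and at most $b$ times, the label of an edge being the number of traversals.) *)

theory Defs
  imports Main
begin

definition simple_graph :: "'a set \<Rightarrow> 'a set set \<Rightarrow> bool" where
  "simple_graph V E \<longleftrightarrow> finite V \<and> (\<forall>e\<in>E. e \<subseteq> V \<and> card e = 2)"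

definition connected_graph :: "'a set \<Rightarrow> 'a set set \<Rightarrow> bool" where
  "connected_graph V F \<longleftrightarrow>
     (\<forall>u\<in>V. \<forall>v\<in>V. (u, v) \<in> {(x, y). {x, y} \<in> F}\<^sup>*)"

definition ab_labelling :: "'a set \<Rightarrow> 'a set set \<Rightarrow> nat \<Rightarrow> nat \<Rightarrow> ('a set \<Rightarrow> nat) \<Rightarrow> bool" where
  "ab_labelling V E a b lab \<longleftrightarrow>
     (\<forall>v\<in>V. even (\<Sum>e\<in>{e\<in>E. v \<in> e}. lab e)
            \<and> 2 * a \<le> (\<Sum>e\<in>{e\<in>E. v \<in> e}. lab e)
            \<and> (\<Sum>e\<in>{e\<in>E. v \<in> e}. lab e) \<le> 2 * b)
     \<and> connected_graph V {e\<in>E. lab e \<noteq> 0}"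

end

theory Submission
  imports Defs
begin

text \<open>Cap every label above \<open>2a\<close> at \<open>2a\<close> or \<open>2a - 1\<close>, whichever has the same parity.
  The vertex sums keep their parity, do not grow, and the support of the labelling is
  unchanged. A vertex sum can only drop below \<open>2a\<close> if some incident label was capped; but
  then the sum is still at least \<open>2a - 1\<close>, and being even it is at least \<open>2a\<close>.\<close>

definition parity_cap :: "nat \<Rightarrow> nat \<Rightarrow> nat" where
  "parity_cap c n = (if n \<le> c then n else if even n then c else c - 1)"

lemma parity_cap_le: "parity_cap c n \<le> n"
  by (auto simp: parity_cap_def)

lemma parity_cap_le_cap: "parity_cap c n \<le> c"
  by (auto simp: parity_cap_def)

lemma parity_cap_ge: "c < n \<Longrightarrow> c - 1 \<le> parity_cap c n"
  by (auto simp: parity_cap_def)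

lemma even_parity_cap_iff: "even c \<Longrightarrow> 1 \<le> c \<Longrightarrow> even (parity_cap c n) \<longleftrightarrow> even n"
  by (auto simp: parity_cap_def)

lemma parity_cap_eq_0_iff: "2 \<le> c \<Longrightarrow> parity_cap c n = 0 \<longleftrightarrow> n = 0"
  by (auto simp: parity_cap_def)

lemma even_sum_parity_cap:
  assumes "even c" "1 \<le> c" "even (\<Sum>x\<in>S. f x)"
  shows "even (\<Sum>x\<in>S. parity_cap c (f x))"
proof -
  have "even (\<Sum>x\<in>S. f x + parity_cap c (f x))"
    using assms(1,2) by (intro dvd_sum) (simp add: even_parity_cap_iff)
  then show ?thesis
    using assms(3) by (simp add: sum.distrib)
qed

lemma sum_parity_cap_ge:
  assumes "finite S" "even c" "1 \<le> c" "even (\<Sum>x\<in>S. f x)" "c \<le> (\<Sum>x\<in>S. f x)"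
  shows "c \<le> (\<Sum>x\<in>S. parity_cap c (f x))"
proof (cases "\<forall>x\<in>S. f x \<le> c")
  case True
  then have "(\<Sum>x\<in>S. parity_cap c (f x)) = (\<Sum>x\<in>S. f x)"
    by (intro sum.cong) (auto simp: parity_cap_def)
  then show ?thesis
    using assms(5) by simp
next
  case False
  then obtain x where x: "x \<in> S" "c < f x"
    by (auto simp: not_le)
  have "c - 1 \<le> parity_cap c (f x)"
    using x(2) by (rule parity_cap_ge)
  also have "\<dots> \<le> (\<Sum>y\<in>S. parity_cap c (f y))"
    using assms(1) x(1) by (intro member_le_sum) auto
  finally show ?thesis
    using even_sum_parity_cap[OF assms(2-4)] assms(2,3) by (auto elim!: evenE)
qed

lemma simple_graph_finite_edges: "simple_graph V E \<Longrightarrow> finite E"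
  unfolding simple_graph_def by (meson Pow_iff finite_Pow_iff finite_subset subsetI)

lemma ab_labelling_parity_cap:
  assumes "finite E" "1 \<le> a" "ab_labelling V E a b lab"
  shows "ab_labelling V E a b (\<lambda>e. parity_cap (2 * a) (lab e))"
  unfolding ab_labelling_def
proof (intro conjI ballI)
  fix v assume "v \<in> V"
  let ?S = "{e\<in>E. v \<in> e}"
  have S: "finite ?S" "even (sum lab ?S)" "2 * a \<le> sum lab ?S" "sum lab ?S \<le> 2 * b"
    using assms(1,3) \<open>v \<in> V\<close> by (auto simp: ab_labelling_def)
  show "even (\<Sum>e\<in>?S. parity_cap (2 * a) (lab e))"
    using assms(2) S(2) by (intro even_sum_parity_cap) auto
  show "2 * a \<le> (\<Sum>e\<in>?S. parity_cap (2 * a) (lab e))"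
    using assms(2) S(1-3) by (intro sum_parity_cap_ge) auto
  have "(\<Sum>e\<in>?S. parity_cap (2 * a) (lab e)) \<le> sum lab ?S"
    by (intro sum_mono parity_cap_le)
  then show "(\<Sum>e\<in>?S. parity_cap (2 * a) (lab e)) \<le> 2 * b"
    using S(4) by linarith
next
  have "{e\<in>E. parity_cap (2 * a) (lab e) \<noteq> 0} = {e\<in>E. lab e \<noteq> 0}"
    using assms(2) by (simp add: parity_cap_eq_0_iff)
  then show "connected_graph V {e\<in>E. parity_cap (2 * a) (lab e) \<noteq> 0}"
    using assms(3) by (simp add: ab_labelling_def)
qed

theorem lemma3p1:
  fixes V :: "'a set" and E :: "'a set set" and a b :: nat and lab :: "'a set \<Rightarrow> nat"
  assumes "simple_graph V E" and "1 \<le> a" and "a \<le> b"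
    and "ab_labelling V E a b lab"
  shows "\<exists>lab'. ab_labelling V E a b lab' \<and> (\<forall>e\<in>E. lab' e \<le> 2 * a)"
proof -
  have "ab_labelling V E a b (\<lambda>e. parity_cap (2 * a) (lab e))"
    using simple_graph_finite_edges[OF assms(1)] assms(2,4) by (rule ab_labelling_parity_cap)
  then show ?thesis
    using parity_cap_le_cap by blast
qed

end
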